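(* Let $(\mathcal{S},\mathcal{R})$ be an $r$-complete positive presentation satisfying: (C$_r$) $\mathcal{R}$ contains no relation $su=sv$ with $s\in\mathcal{S}$ and $u\neq v$; (E$_r$) there exists a set $\mathcal{S}'$ with $\mathcal{S}\subseteq\mathcal{S}'\subseteq\mathcal{S}^*$ such that for all $u,v\in\mathcal{S}'$ there exist $u',v'\in\mathcal{S}'$ satisfying $(uv')^{-1}(vu')\curvearrowright_r\varepsilon$. Then: (i) for all words $\mathbf{w},\mathbf{w}'$ on $\mathcal{S}\cup\mathcal{S}^{-1}$, $\mathbf{w}\equiv^{\pm}\mathbf{w}'$ holds if and only if there exist $u,v,w,u',v',w'\in\mathcal{S}^*$ with $\mathbf{w}\curvearrowright_r vu^{-1}$, $\mathbf{w}'\curvearrowright_r v'u'^{-1}$, $uw\equiv u'w'$ and $vw\equiv v'w'$; (ii) for all $u,u'\in\mathcal{S}^*$, $u\equiv^{\pm}u'$ holds if and only if there exists $w\in\mathcal{S}^*$ with $uw\equiv u'w$.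
   Context: A positive presentation is a pair $(\mathcal{S},\mathcal{R})$ where $\mathcal{S}$ is a nonempty set of letters and $\mathcal{R}$ is a family of relations $u=v$, i.e. unordered pairs $\{u,v\}$ of nonempty words in the free monoid $\mathcal{S}^*$ (letters are regarded as length-one words). $\varepsilon$ denotes the empty word; $\equiv$ is the smallest congruence on $\mathcal{S}^*$ containing all pairs of $\mathcal{R}$. Let $\mathcal{S}^{-1}=\{s^{-1}:s\in\mathcal{S}\}$ be a disjoint copy of $\mathcal{S}$; $\equiv^{\pm}$ is the smallest congruence on $(\mathcal{S}\cup\mathcal{S}^{-1})^*$ containing all pairs of $\mathcal{R}$ and all pairs $\{ss^{-1},\varepsilon\}$, $\{s^{-1}s,\varepsilon\}$ for $s\in\mathcal{S}$. For $u\in\mathcal{S}^*$, $u^{-1}$ is obtained by reversing the order of the letters of $u$ and replacing each $s$ by $s^{-1}$. Right reversing: for words $\mathbf{w},\mathbf{w}'$ on $\mathcal{S}\cup\mathcal{S}^{-1}$ we write $\mathbf{w}\curvearrowright_r\mathbf{w}'$ if $\mathbf{w}'$ is obtained from $\mathbf{w}$ by a finite (possibly empty) sequence of steps, each of which either deletes a subword $u^{-1}u$ with $u\in\mathcal{S}^*$ nonempty, or replaces a subword $u^{-1}v$ with $u,v\in\mathcal{S}^*$ nonempty by a word $v'u'^{-1}$ with $u',v'\in\mathcal{S}^*$ such that $uv'=vu'$ is a relation of $\mathcal{R}$. $(\mathcal{S},\mathcal{R})$ is $r$-complete if for all $u,v,u',v'\in\mathcal{S}^*$ with $uv'\equiv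 vu'$ there exist $u'',v'',w\in\mathcal{S}^*$ with $u^{-1}v\curvearrowright_r v''u''^{-1}$, $u'\equiv u''w$ and $v'\equiv v''w$. *)

theory Defs
  imports Main
begin

text \<open>Alphabet: the type 'a plays the role of the (nonempty) letter set S; positive words are
  'a list (S^*); R is a set of pairs of words, each pair (u,v) standing for the unordered
  relation u = v.\<close>

datatype 'a sletter = Pos 'a | Neg 'a

definition pw :: "'a list \<Rightarrow> 'a sletter list" where
  "pw u = map Pos u"

definition iw :: "'a list \<Rightarrow> 'a sletter list" where
  "iw u = rev (map Neg u)"

definition is_relation :: "('a list \<times> 'a list) set \<Rightarrow> 'a list \<Rightarrow> 'a list \<Rightarrow> bool" where
  "is_relation R u v \<longleftrightarrow> (u, v) \<in> R \<or> (v, u) \<in> R"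

definition positive_presentation :: "('a list \<times> 'a list) set \<Rightarrow> bool" where
  "positive_presentation R \<longleftrightarrow> (\<forall>(u, v) \<in> R. u \<noteq> [] \<and> v \<noteq> [])"

inductive pcong :: "('a list \<times> 'a list) set \<Rightarrow> 'a list \<Rightarrow> 'a list \<Rightarrow> bool"
  for R where
  base: "(u, v) \<in> R \<Longrightarrow> pcong R u v"
| refl: "pcong R u u"
| sym: "pcong R u v \<Longrightarrow> pcong R v u"
| trans: "pcong R u v \<Longrightarrow> pcong R v w \<Longrightarrow> pcong R u w"
| compat: "pcong R u v \<Longrightarrow> pcong R u' v' \<Longrightarrow> pcong R (u @ u') (v @ v')"

inductive gcong :: "('a list \<times> 'a list) set \<Rightarrow> 'a sletter list \<Rightarrow> 'a sletter list \<Rightarrow> bool"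
  for R where
  base: "(u, v) \<in> R \<Longrightarrow> gcong R (pw u) (pw v)"
| invr: "gcong R [Pos s, Neg s] []"
| invl: "gcong R [Neg s, Pos s] []"
| refl: "gcong R w w"
| sym: "gcong R w w' \<Longrightarrow> gcong R w' w"
| trans: "gcong R w1 w2 \<Longrightarrow> gcong R w2 w3 \<Longrightarrow> gcong R w1 w3"
| compat: "gcong R w1 w2 \<Longrightarrow> gcong R w1' w2' \<Longrightarrow> gcong R (w1 @ w1') (w2 @ w2')"

definition rrev_step :: "('a list \<times> 'a list) set \<Rightarrow> 'a sletter list \<Rightarrow> 'a sletter list \<Rightarrow> bool" where
  "rrev_step R w w' \<longleftrightarrow>
     (\<exists>x y u. u \<noteq> [] \<and> w = x @ iw u @ pw u @ y \<and> w' = x @ y) \<or>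
     (\<exists>x y u v u' v'. u \<noteq> [] \<and> v \<noteq> [] \<and> is_relation R (u @ v') (v @ u') \<and>
        w = x @ iw u @ pw v @ y \<and> w' = x @ pw v' @ iw u' @ y)"

definition rrev :: "('a list \<times> 'a list) set \<Rightarrow> 'a sletter list \<Rightarrow> 'a sletter list \<Rightarrow> bool" where
  "rrev R = (rrev_step R)\<^sup>*\<^sup>*"

definition r_complete :: "('a list \<times> 'a list) set \<Rightarrow> bool" where
  "r_complete R \<longleftrightarrow>
     (\<forall>u v u' v'. pcong R (u @ v') (v @ u') \<longrightarrow>
        (\<exists>u'' v'' w. rrev R (iw u @ pw v) (pw v'' @ iw u'') \<and>
                     pcong R u' (u'' @ w) \<and> pcong R v' (v'' @ w)))"

definition cond_C :: "('a list \<times> 'a list) set \<Rightarrow> bool" where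
  "cond_C R \<longleftrightarrow> \<not> (\<exists>s u v. u \<noteq> v \<and> is_relation R (s # u) (s # v))"

definition cond_E :: "('a list \<times> 'a list) set \<Rightarrow> bool" where
  "cond_E R \<longleftrightarrow> (\<exists>S' :: 'a list set. (\<forall>s. [s] \<in> S') \<and>
     (\<forall>u \<in> S'. \<forall>v \<in> S'. \<exists>u' \<in> S'. \<exists>v' \<in> S'. rrev R (iw (u @ v') @ pw (v @ u')) []))"

end

theory Submission
  imports Defs
begin

text \<open>Condition (C_r) and r-completeness make the monoid left cancellative: a congruence
  s u \<equiv> s v is witnessed by a reversing of s\<inverse> s, and by (C_r) such a reversing can only
  end in a word t t\<inverse>, whence u \<equiv> v. Condition (E_r) gives common right multiples, so Ore's
  theorem applies. Concretely, a signed word w relates positive words p, q when w p = q in the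
  group, i.e. when w represents the right fraction q p\<inverse>. Equivalent signed
  words represent equal fractions (p x \<equiv> p' x' and q x \<equiv> q' x'), and every signed word reverses
  to a word v u\<inverse>, which then represents the same fraction as it does.\<close>

lemma pw_simps [simp]:
  "pw [] = []" "pw (s # u) = Pos s # pw u" "pw (u @ v) = pw u @ pw v"
  by (simp_all add: pw_def)

lemma iw_simps [simp]:
  "iw [] = []" "iw (s # u) = iw u @ [Neg s]" "iw (u @ v) = iw v @ iw u"
  by (simp_all add: iw_def)

lemma Pos_notin_iw [simp]: "Pos s \<notin> set (iw u)"
  by (auto simp: iw_def)

lemma iw_eq_iff [simp]: "iw u = iw v \<longleftrightarrow> u = v"
  by (simp add: iw_def inj_map_eq_map inj_def)

lemma iw_neq_Pos_Cons: "iw b \<noteq> Pos s # w"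
  by (metis Pos_notin_iw list.set_intros(1))

lemma pw_append_iw_eq_iff: "pw a @ iw b = pw c @ iw d \<longleftrightarrow> a = c \<and> b = d"
proof (induction a arbitrary: c)
  case Nil
  then show ?case
    by (cases c) (simp_all add: iw_neq_Pos_Cons)
next
  case (Cons s a)
  then show ?case
    by (cases c) (simp_all add: iw_neq_Pos_Cons[symmetric])
qed

lemma pw_append_iw_neq_Neg_Pos: "pw a @ iw b \<noteq> x @ Neg s # Pos t # y"
proof (induction a arbitrary: x)
  case Nil
  have "Pos t \<in> set (x @ Neg s # Pos t # y)"
    by simp
  then show ?case
    using Pos_notin_iw[of t b] by (metis append_Nil pw_simps(1))
next
  case (Cons c a)
  then show ?case
    by (cases x) auto
qed

declare pcong.refl [iff]
lemmas [trans] = pcong.trans gcong.trans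

lemma pcong_append_left: "pcong R u v \<Longrightarrow> pcong R (x @ u) (x @ v)"
  by (rule pcong.compat[OF pcong.refl])

lemma pcong_append_right: "pcong R u v \<Longrightarrow> pcong R (u @ x) (v @ x)"
  by (rule pcong.compat[OF _ pcong.refl])

lemma pcong_Cons: "pcong R u v \<Longrightarrow> pcong R (s # u) (s # v)"
  using pcong_append_left[of R u v "[s]"] by simp

lemma pcong_if_is_relation: "is_relation R u v \<Longrightarrow> pcong R u v"
  unfolding is_relation_def using pcong.base pcong.sym by blast

definition left_cancellative :: "('a list \<times> 'a list) set \<Rightarrow> bool" where
  "left_cancellative R \<longleftrightarrow> (\<forall>z u v. pcong R (z @ u) (z @ v) \<longrightarrow> pcong R u v)"

definition common_right_multiples :: "('a list \<times> 'a list) set \<Rightarrow> bool" where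
  "common_right_multiples R \<longleftrightarrow> (\<forall>u v. \<exists>u' v'. pcong R (u @ v') (v @ u'))"

lemma left_cancellativeD: "left_cancellative R \<Longrightarrow> pcong R (z @ u) (z @ v) \<Longrightarrow> pcong R u v"
  unfolding left_cancellative_def by blast

lemma left_cancellativeI:
  assumes "\<And>s u v. pcong R (s # u) (s # v) \<Longrightarrow> pcong R u v"
  shows "left_cancellative R"
proof -
  have "pcong R (z @ u) (z @ v) \<Longrightarrow> pcong R u v" for z u v
    by (induction z) (auto intro: assms)
  then show ?thesis
    unfolding left_cancellative_def by blast
qed

lemma common_right_multipleE:
  assumes "common_right_multiples R"
  obtains u' v' where "pcong R (u @ v') (v @ u')"
  using assms unfolding common_right_multiples_def by blast

section \<open>Signed words acting on positive words\<close>

text \<open>acts R w p q expresses w p = q in the group, that is, w represents the fraction q p\<inverse>.\<close>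

fun acts :: "('a list \<times> 'a list) set \<Rightarrow> 'a sletter list \<Rightarrow> 'a list \<Rightarrow> 'a list \<Rightarrow> bool" where
  "acts R [] p q \<longleftrightarrow> pcong R p q"
| "acts R (Pos s # w) p q \<longleftrightarrow> (\<exists>r. acts R w p r \<and> pcong R (s # r) q)"
| "acts R (Neg s # w) p q \<longleftrightarrow> acts R w p (s # q)"

lemma acts_pcong: "acts R w p q \<Longrightarrow> pcong R p p' \<Longrightarrow> pcong R q q' \<Longrightarrow> acts R w p' q'"
proof (induction w arbitrary: p q p' q')
  case Nil
  then show ?case
    by (meson acts.simps(1) pcong.sym pcong.trans)
next
  case (Cons l w)
  show ?case
  proof (cases l)
    case (Pos s)
    with Cons.prems obtain r where "acts R w p r" "pcong R (s # r) q"
      by auto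
    with Cons.IH[of p r p' r] Cons.prems Pos show ?thesis
      by (auto intro: pcong.trans)
  next
    case (Neg s)
    with Cons.prems Cons.IH[of p "s # q" p' "s # q'"] show ?thesis
      by (auto intro: pcong_Cons)
  qed
qed

lemma acts_append: "acts R (x @ y) p q \<longleftrightarrow> (\<exists>r. acts R y p r \<and> acts R x r q)"
proof (induction x arbitrary: q)
  case Nil
  then show ?case
    by (auto intro: acts_pcong pcong.sym)
next
  case (Cons l x)
  then show ?case
    by (cases l) auto
qed

lemma acts_pw: "acts R (pw u) p q \<longleftrightarrow> pcong R (u @ p) q"
proof (induction u arbitrary: q)
  case (Cons s u)
  then show ?case
    by (auto intro: pcong.trans pcong_Cons)
qed simp

lemma acts_iw: "acts R (iw u) p q \<longleftrightarrow> pcong R p (u @ q)"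
proof (induction u arbitrary: p q)
  case (Cons s u)
  have "acts R (iw (s # u)) p q \<longleftrightarrow> (\<exists>r. pcong R p (s # r) \<and> pcong R r (u @ q))"
    using Cons by (simp add: acts_append)
  also have "\<dots> \<longleftrightarrow> pcong R p (s # u @ q)"
    by (auto intro: pcong.trans pcong_Cons)
  finally show ?case
    by simp
qed simp

lemma acts_fraction: "acts R (pw v @ iw u) u v"
  by (auto simp: acts_append acts_pw acts_iw intro!: exI[of _ "[]"])

lemma acts_append_right: "acts R w p q \<Longrightarrow> acts R w (p @ x) (q @ x)"
proof (induction w arbitrary: q)
  case Nil
  then show ?case
    by (simp add: pcong_append_right)
next
  case (Cons l w)
  show ?case
  proof (cases l)
    case (Pos s)
    with Cons.prems obtain r where "acts R w p r" "pcong R (s # r) q"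
      by auto
    with Cons.IH[of r] Pos pcong_append_right[of R "s # r" q x] show ?thesis
      by auto
  next
    case (Neg s)
    with Cons.prems Cons.IH[of "s # q"] show ?thesis
      by auto
  qed
qed

lemma acts_iw_pw: "acts R (iw u @ pw v) p q \<longleftrightarrow> pcong R (v @ p) (u @ q)"
  by (auto simp: acts_append acts_pw acts_iw intro: pcong.trans)

lemma acts_pw_iw: "acts R (pw v @ iw u) p q \<longleftrightarrow> (\<exists>m. pcong R p (u @ m) \<and> pcong R (v @ m) q)"
  by (auto simp: acts_append acts_pw acts_iw)

lemma acts_context:
  assumes "acts R (x @ b @ y) p q" and "\<And>r r'. acts R b r r' \<Longrightarrow> acts R a r r'"
  shows "acts R (x @ a @ y) p q"
  using assms by (auto simp: acts_append)

lemma rrev_step_acts: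
  assumes "rrev_step R w w'" and "acts R w' p q"
  shows "acts R w p q"
  using assms(1) unfolding rrev_step_def
proof (elim disjE exE conjE)
  fix x y u
  assume w: "w = x @ iw u @ pw u @ y" and w': "w' = x @ y"
  have "acts R (iw u @ pw u) r r'" if "acts R [] r r'" for r r'
    using that by (simp add: acts_iw_pw pcong_append_left)
  from acts_context[of R x "[]" y p q, OF _ this] assms(2) w w' show ?thesis
    by simp
next
  fix x y u v u' v'
  assume rel: "is_relation R (u @ v') (v @ u')"
    and w: "w = x @ iw u @ pw v @ y" and w': "w' = x @ pw v' @ iw u' @ y"
  have "acts R (iw u @ pw v) r r'" if "acts R (pw v' @ iw u') r r'" for r r'
  proof -
    from that obtain m where m: "pcong R r (u' @ m)" "pcong R (v' @ m) r'"
      by (auto simp: acts_pw_iw)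
    have "pcong R (v @ r) (v @ u' @ m)"
      using m(1) by (rule pcong_append_left)
    also have "pcong R (v @ u' @ m) (u @ v' @ m)"
      using pcong_append_right[OF pcong.sym[OF pcong_if_is_relation[OF rel]], of m] by simp
    also have "pcong R (u @ v' @ m) (u @ r')"
      using m(2) by (rule pcong_append_left)
    finally show ?thesis
      by (simp add: acts_iw_pw)
  qed
  from acts_context[of R x "pw v' @ iw u'" y p q, OF _ this] assms(2) w w' show ?thesis
    by simp
qed

lemma rrev_acts: "rrev R w w' \<Longrightarrow> acts R w' p q \<Longrightarrow> acts R w p q"
  unfolding rrev_def by (induction rule: rtranclp_induct) (auto intro: rrev_step_acts)

lemma rrev_step_context:
  assumes "rrev_step R w w'"
  shows "rrev_step R (x @ w @ y) (x @ w' @ y)"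
  using assms[unfolded rrev_step_def]
proof (elim disjE exE conjE)
  fix x0 y0 u
  assume "u \<noteq> []" "w = x0 @ iw u @ pw u @ y0" "w' = x0 @ y0"
  then show ?thesis
    unfolding rrev_step_def by (intro disjI1 exI[of _ "x @ x0"] exI[of _ "y0 @ y"] exI[of _ u]) simp
next
  fix x0 y0 u v u' v'
  assume "u \<noteq> []" "v \<noteq> []" "is_relation R (u @ v') (v @ u')"
    "w = x0 @ iw u @ pw v @ y0" "w' = x0 @ pw v' @ iw u' @ y0"
  then show ?thesis
    unfolding rrev_step_def
    by (intro disjI2 exI[of _ "x @ x0"] exI[of _ "y0 @ y"] exI[of _ u] exI[of _ v]
        exI[of _ u'] exI[of _ v']) simp
qed

lemma rrev_context: "rrev R w w' \<Longrightarrow> rrev R (x @ w @ y) (x @ w' @ y)"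
  unfolding rrev_def
  by (induction rule: rtranclp_induct) (auto intro: rtranclp.rtrancl_into_rtrancl rrev_step_context)

lemma not_rrev_step_fraction: "\<not> rrev_step R (pw a @ iw b) w"
proof
  assume "rrev_step R (pw a @ iw b) w"
  then obtain x y u v where "u \<noteq> []" "v \<noteq> []" and e: "pw a @ iw b = x @ iw u @ pw v @ y"
    unfolding rrev_step_def by blast
  then obtain s u0 t v0 where "u = s # u0" "v = t # v0"
    by (auto simp: neq_Nil_conv)
  with e have "pw a @ iw b = (x @ iw u0) @ Neg s # Pos t # (pw v0 @ y)"
    by simp
  then show False
    by (rule pw_append_iw_neq_Neg_Pos[THEN notE])
qed

lemma rrev_from_fraction: "rrev R (pw a @ iw b) w \<Longrightarrow> w = pw a @ iw b"
  unfolding rrev_def by (erule converse_rtranclpE) (simp_all add: not_rrev_step_fraction)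

section \<open>The Ore conditions\<close>

lemma r_completeD:
  assumes "r_complete R" and "pcong R (u @ v') (v @ u')"
  shows "\<exists>u'' v'' w. rrev R (iw u @ pw v) (pw v'' @ iw u'') \<and>
    pcong R u' (u'' @ w) \<and> pcong R v' (v'' @ w)"
  using assms unfolding r_complete_def by blast

lemma rrev_step_Neg_Pos:
  assumes "cond_C R" and "rrev_step R [Neg s, Pos s] w"
  shows "\<exists>t. w = pw t @ iw t"
  using assms(2)[unfolded rrev_step_def]
proof (elim disjE exE conjE)
  fix x y u
  assume "u \<noteq> []" and e: "[Neg s, Pos s] = x @ iw u @ pw u @ y" and "w = x @ y"
  moreover from arg_cong[where f = length, OF e] have "length x + 2 * length u + length y = 2"
    by (simp add: iw_def pw_def)
  ultimately have "w = pw [] @ iw []"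
    by (cases u) auto
  then show ?thesis
    by blast
next
  fix x y u v u' v'
  assume "u \<noteq> []" "v \<noteq> []" and rel: "is_relation R (u @ v') (v @ u')"
    and e: "[Neg s, Pos s] = x @ iw u @ pw v @ y" and w: "w = x @ pw v' @ iw u' @ y"
  from arg_cong[where f = length, OF e] have "length x + length u + length v + length y = 2"
    by (simp add: iw_def pw_def)
  with \<open>u \<noteq> []\<close> \<open>v \<noteq> []\<close> obtain a b where "x = []" "y = []" "u = [a]" "v = [b]"
    by (cases u; cases v) auto
  moreover from this e have "a = s" "b = s"
    by auto
  ultimately have "v' = u'"
    using rel assms(1) unfolding cond_C_def by auto
  with w \<open>x = []\<close> \<open>y = []\<close> show ?thesis
    by auto
qed

lemma rrev_Neg_Pos:
  assumes "cond_C R" and "rrev R [Neg s, Pos s] (pw a @ iw b)"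
  shows "a = b"
  using assms(2)[unfolded rrev_def]
proof (cases rule: converse_rtranclpE)
  case base
  then show ?thesis
    using pw_append_iw_neq_Neg_Pos[of a b "[]" s s "[]"] by simp
next
  case (step w)
  from rrev_step_Neg_Pos[OF assms(1) step(1)] obtain t where "w = pw t @ iw t"
    by blast
  with step(2) have "pw a @ iw b = pw t @ iw t"
    using rrev_from_fraction[unfolded rrev_def] by metis
  then show ?thesis
    by (simp add: pw_append_iw_eq_iff)
qed

lemma left_cancellative_if_complete:
  assumes "cond_C R" and "r_complete R"
  shows "left_cancellative R"
proof (rule left_cancellativeI)
  fix s u v
  assume "pcong R (s # u) (s # v)"
  then have "pcong R ([s] @ u) ([s] @ v)"
    by simp
  from r_completeD[OF assms(2) this] obtain u'' v'' w
    where "rrev R [Neg s, Pos s] (pw v'' @ iw u'')"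
      and "pcong R v (u'' @ w)" and "pcong R u (v'' @ w)"
    by auto
  moreover from rrev_Neg_Pos[OF assms(1) this(1)] have "v'' = u''" .
  ultimately show "pcong R u v"
    by (metis pcong.sym pcong.trans)
qed

lemma rrev_Nil_pcong: "rrev R (iw u @ pw v) [] \<Longrightarrow> pcong R u v"
  using rrev_acts[of R "iw u @ pw v" "[]" "[]" "[]"] by (simp add: acts_iw_pw pcong.sym)

lemma common_right_multiples_if_closed:
  assumes letters: "\<And>s. [s] \<in> S"
    and closed: "\<And>u v. u \<in> S \<Longrightarrow> v \<in> S \<Longrightarrow> \<exists>u' \<in> S. \<exists>v'. pcong R (u @ v') (v @ u')"
  shows "common_right_multiples R"
proof -
  have multiple_in_S: "\<exists>a' \<in> S. \<exists>b'. pcong R (a @ b') (b @ a')" if "a \<in> S" for a b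
    using that
  proof (induction b arbitrary: a)
    case Nil
    then show ?case
      by (intro bexI[of _ a] exI[of _ "[]"]) auto
  next
    case (Cons s b)
    from closed[OF Cons.prems letters] obtain a1 c where "a1 \<in> S" and c: "pcong R (a @ c) ([s] @ a1)"
      by blast
    from Cons.IH[OF \<open>a1 \<in> S\<close>] obtain a' b' where "a' \<in> S" and b': "pcong R (a1 @ b') (b @ a')"
      by blast
    have "pcong R (a @ c @ b') (s # a1 @ b')"
      using pcong_append_right[OF c, of b'] by simp
    also have "pcong R (s # a1 @ b') (s # b @ a')"
      using b' by (rule pcong_Cons)
    finally have "pcong R (a @ (c @ b')) ((s # b) @ a')"
      by simp
    with \<open>a' \<in> S\<close> show ?case
      by blast
  qed
  have "\<exists>a' b'. pcong R (a @ b') (b @ a')" for a b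
  proof (induction a arbitrary: b)
    case Nil
    then show ?case
      by (intro exI[of _ "[]"] exI[of _ b]) simp
  next
    case (Cons s a)
    from multiple_in_S[OF letters, of s b] obtain a1 b1 where b1: "pcong R (s # b1) (b @ a1)"
      by auto
    from Cons.IH[of b1] obtain a' b' where b': "pcong R (a @ b') (b1 @ a')"
      by blast
    have "pcong R (s # a @ b') (s # b1 @ a')"
      using b' by (rule pcong_Cons)
    also have "pcong R (s # b1 @ a') (b @ a1 @ a')"
      using pcong_append_right[OF b1, of a'] by simp
    finally have "pcong R ((s # a) @ b') (b @ (a1 @ a'))"
      by simp
    then show ?case
      by blast
  qed
  then show ?thesis
    unfolding common_right_multiples_def by blast
qed

lemma common_right_multiples_if_cond_E:
  assumes "cond_E R"
  shows "common_right_multiples R"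
proof -
  from assms obtain S where letters: "\<forall>s. [s] \<in> S"
    and closed: "\<forall>u \<in> S. \<forall>v \<in> S. \<exists>u' \<in> S. \<exists>v' \<in> S. rrev R (iw (u @ v') @ pw (v @ u')) []"
    unfolding cond_E_def by (elim exE conjE)
  show ?thesis
  proof (rule common_right_multiples_if_closed)
    show "[s] \<in> S" for s
      using letters by blast
    show "\<exists>u' \<in> S. \<exists>v'. pcong R (u @ v') (v @ u')" if "u \<in> S" "v \<in> S" for u v
      using closed that by (blast dest: rrev_Nil_pcong)
  qed
qed

lemma rrev_to_fraction:
  assumes "common_right_multiples R" and "r_complete R"
  shows "\<exists>v u. rrev R w (pw v @ iw u)"
proof (induction w)
  case Nil
  have "rrev R [] (pw [] @ iw [])"
    by (simp add: rrev_def)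
  then show ?case
    by blast
next
  case (Cons l w)
  then obtain v u where w: "rrev R w (pw v @ iw u)"
    by blast
  show ?case
  proof (cases l)
    case (Pos s)
    with rrev_context[OF w, of "[Pos s]" "[]"] show ?thesis
      by (intro exI[of _ "s # v"] exI[of _ u]) simp
  next
    case (Neg s)
    obtain v1 u1 where "rrev R (iw [s] @ pw v) (pw v1 @ iw u1)"
      using r_completeD[OF assms(2) common_right_multipleE[OF assms(1)]] by blast
    from rrev_context[OF this, of "[]" "iw u"]
    have "rrev R (iw [s] @ pw v @ iw u) (pw v1 @ iw (u @ u1))"
      by simp
    moreover from rrev_context[OF w, of "[Neg s]" "[]"] Neg have "rrev R (l # w) (iw [s] @ pw v @ iw u)"
      by simp
    ultimately show ?thesis
      unfolding rrev_def by (meson rtranclp_trans)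
  qed
qed

section \<open>Reversing and the group congruence\<close>

lemma gcong_context: "gcong R a b \<Longrightarrow> gcong R (x @ a @ y) (x @ b @ y)"
  by (intro gcong.compat gcong.refl)

lemma gcong_pw_iw: "gcong R (pw u @ iw u) []"
proof (induction u)
  case Nil
  then show ?case
    by (simp add: gcong.refl)
next
  case (Cons s u)
  have "gcong R ([Pos s] @ (pw u @ iw u) @ [Neg s]) ([Pos s] @ [] @ [Neg s])"
    using Cons by (rule gcong_context)
  also have "gcong R ([Pos s] @ [] @ [Neg s]) []"
    by (simp add: gcong.invr)
  finally show ?case
    by simp
qed

lemma gcong_iw_pw: "gcong R (iw u @ pw u) []"
proof (induction u)
  case Nil
  then show ?case
    by (simp add: gcong.refl)
next
  case (Cons s u)
  have "gcong R (iw u @ [Neg s, Pos s] @ pw u) (iw u @ [] @ pw u)"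
    by (rule gcong_context[OF gcong.invl])
  also have "gcong R (iw u @ [] @ pw u) []"
    using Cons by simp
  finally show ?case
    by simp
qed

lemma gcong_pw_if_pcong: "pcong R a b \<Longrightarrow> gcong R (pw a) (pw b)"
proof (induction rule: pcong.induct)
  case (compat u v u' v')
  then show ?case
    using gcong.compat by fastforce
qed (auto intro: gcong.base gcong.refl gcong.sym gcong.trans)

lemma gcong_iw_if_pcong:
  assumes "pcong R a b"
  shows "gcong R (iw a) (iw b)"
proof -
  have "gcong R (iw a) (iw a @ pw b @ iw b)"
    using gcong_context[OF gcong.sym[OF gcong_pw_iw[of R b]], of "iw a" "[]"] by simp
  also have "gcong R (iw a @ pw b @ iw b) (iw a @ pw a @ iw b)"
    using gcong_context[OF gcong_pw_if_pcong[OF pcong.sym[OF assms]]] .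
  also have "gcong R (iw a @ pw a @ iw b) (iw b)"
    using gcong_context[OF gcong_iw_pw[of R a], of "[]" "iw b"] by simp
  finally show ?thesis .
qed

lemma gcong_fraction:
  assumes "pcong R (u @ x) (u' @ x')" and "pcong R (v @ x) (v' @ x')"
  shows "gcong R (pw v @ iw u) (pw v' @ iw u')"
proof -
  have "gcong R (pw v @ iw u) (pw (v @ x) @ iw (u @ x))"
    using gcong_context[OF gcong.sym[OF gcong_pw_iw[of R x]], of "pw v" "iw u"] by simp
  also have "gcong R (pw (v @ x) @ iw (u @ x)) (pw (v' @ x') @ iw (u @ x))"
    using gcong_context[OF gcong_pw_if_pcong[OF assms(2)], of "[]" "iw (u @ x)"] by simp
  also have "gcong R (pw (v' @ x') @ iw (u @ x)) (pw (v' @ x') @ iw (u' @ x'))"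
    using gcong_context[OF gcong_iw_if_pcong[OF assms(1)], of "pw (v' @ x')" "[]"] by simp
  also have "gcong R (pw (v' @ x') @ iw (u' @ x')) (pw v' @ iw u')"
    using gcong_context[OF gcong_pw_iw[of R x'], of "pw v'" "iw u'"] by simp
  finally show ?thesis .
qed

lemma rrev_step_gcong:
  assumes "rrev_step R w w'"
  shows "gcong R w w'"
  using assms[unfolded rrev_step_def]
proof (elim disjE exE conjE)
  fix x y u
  assume "w = x @ iw u @ pw u @ y" "w' = x @ y"
  then show ?thesis
    using gcong_context[OF gcong_iw_pw[of R u], of x y] by simp
next
  fix x y u v u' v'
  assume rel: "is_relation R (u @ v') (v @ u')"
    and w: "w = x @ iw u @ pw v @ y" and w': "w' = x @ pw v' @ iw u' @ y"
  have "gcong R (iw u @ pw v) (iw u @ pw (v @ u') @ iw u')"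
    using gcong_context[OF gcong.sym[OF gcong_pw_iw[of R u']], of "iw u @ pw v" "[]"] by simp
  also have "gcong R (iw u @ pw (v @ u') @ iw u') (iw u @ pw (u @ v') @ iw u')"
    using gcong_context[OF gcong_pw_if_pcong[OF pcong.sym[OF pcong_if_is_relation[OF rel]]]] .
  also have "gcong R (iw u @ pw (u @ v') @ iw u') (pw v' @ iw u')"
    using gcong_context[OF gcong_iw_pw[of R u], of "[]" "pw v' @ iw u'"] by simp
  finally have "gcong R (iw u @ pw v) (pw v' @ iw u')"
    by simp
  from gcong_context[OF this, of x y] w w' show ?thesis
    by simp
qed

lemma rrev_gcong: "rrev R w w' \<Longrightarrow> gcong R w w'"
  unfolding rrev_def
  by (induction rule: rtranclp_induct) (auto intro: gcong.refl gcong.trans rrev_step_gcong)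

section \<open>Right fractions\<close>

text \<open>same_fraction R u v u' v' says that v u\<inverse> and v' u'\<inverse> are equal right fractions.\<close>

definition same_fraction :: "('a list \<times> 'a list) set \<Rightarrow> 'a list \<Rightarrow> 'a list \<Rightarrow> 'a list \<Rightarrow> 'a list \<Rightarrow> bool"
  where "same_fraction R u v u' v' \<longleftrightarrow> (\<exists>x x'. pcong R (u @ x) (u' @ x') \<and> pcong R (v @ x) (v' @ x'))"

lemma same_fraction_sym: "same_fraction R u v u' v' \<Longrightarrow> same_fraction R u' v' u v"
  unfolding same_fraction_def by (meson pcong.sym)

lemma same_fraction_trans:
  assumes "common_right_multiples R"
    and "same_fraction R u1 v1 u2 v2" and "same_fraction R u2 v2 u3 v3"
  shows "same_fraction R u1 v1 u3 v3"
proof -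
  from assms(2) obtain x x' where u12: "pcong R (u1 @ x) (u2 @ x')" and v12: "pcong R (v1 @ x) (v2 @ x')"
    unfolding same_fraction_def by blast
  from assms(3) obtain y y' where u23: "pcong R (u2 @ y) (u3 @ y')" and v23: "pcong R (v2 @ y) (v3 @ y')"
    unfolding same_fraction_def by blast
  obtain a b where ab: "pcong R (x' @ a) (y @ b)"
    using common_right_multipleE[OF assms(1)] by blast
  have chain: "pcong R (z1 @ x @ a) (z3 @ y' @ b)"
    if "pcong R (z1 @ x) (z2 @ x')" and "pcong R (z2 @ y) (z3 @ y')" for z1 z2 z3
  proof -
    have "pcong R (z1 @ x @ a) (z2 @ x' @ a)"
      using pcong_append_right[OF that(1), of a] by simp
    also have "pcong R (z2 @ x' @ a) (z2 @ y @ b)"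
      using ab by (rule pcong_append_left)
    also have "pcong R (z2 @ y @ b) (z3 @ y' @ b)"
      using pcong_append_right[OF that(2), of b] by simp
    finally show ?thesis .
  qed
  show ?thesis
    unfolding same_fraction_def using chain[OF u12 u23] chain[OF v12 v23] by blast
qed

lemma same_fraction_if_pcong:
  assumes "common_right_multiples R" and "pcong R u v" and "pcong R u' v'"
  shows "same_fraction R u v u' v'"
proof -
  obtain x x' where x: "pcong R (u @ x) (u' @ x')"
    using common_right_multipleE[OF assms(1)] by blast
  have "pcong R (v @ x) (u @ x)"
    using pcong_append_right[OF pcong.sym[OF assms(2)]] .
  also note x
  also have "pcong R (u' @ x') (v' @ x')"
    using pcong_append_right[OF assms(3)] .
  finally show ?thesis
    unfolding same_fraction_def using x by blast
qed

lemma same_fraction_mult_left: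
  assumes "same_fraction R u v u' v'" and "pcong R (z @ v) q" and "pcong R (z @ v') q'"
  shows "same_fraction R u q u' q'"
proof -
  from assms(1) obtain x x' where u: "pcong R (u @ x) (u' @ x')" and v: "pcong R (v @ x) (v' @ x')"
    unfolding same_fraction_def by blast
  have "pcong R (q @ x) (z @ v @ x)"
    using pcong_append_right[OF pcong.sym[OF assms(2)], of x] by simp
  also have "pcong R (z @ v @ x) (z @ v' @ x')"
    using v by (rule pcong_append_left)
  also have "pcong R (z @ v' @ x') (q' @ x')"
    using pcong_append_right[OF assms(3), of x'] by simp
  finally show ?thesis
    unfolding same_fraction_def using u by blast
qed

lemma same_fraction_cancel_left:
  assumes "left_cancellative R" and "same_fraction R u (z @ v) u' (z @ v')"
  shows "same_fraction R u v u' v'"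
  using assms unfolding same_fraction_def by (auto dest: left_cancellativeD)

lemma acts_exists:
  assumes "common_right_multiples R"
  shows "\<exists>p q. acts R w p q"
proof (induction w)
  case Nil
  then show ?case
    by auto
next
  case (Cons l w)
  then obtain p q where w: "acts R w p q"
    by blast
  show ?case
  proof (cases l)
    case (Pos s)
    with w show ?thesis
      by auto
  next
    case (Neg s)
    obtain x y where "pcong R (q @ x) ([s] @ y)"
      using common_right_multipleE[OF assms] by blast
    then have "acts R w (p @ x) (s # y)"
      using acts_pcong[OF acts_append_right[OF w] pcong.refl] by simp
    with Neg show ?thesis
      by auto
  qed
qed

lemma acts_unique:
  assumes "left_cancellative R" and "common_right_multiples R"
  shows "acts R w p q \<Longrightarrow> acts R w p' q' \<Longrightarrow> same_fraction R p q p' q'"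
proof (induction w arbitrary: p q p' q')
  case Nil
  then show ?case
    using same_fraction_if_pcong[OF assms(2)] by simp
next
  case (Cons l w)
  show ?case
  proof (cases l)
    case (Pos s)
    with Cons.prems obtain r r' where "acts R w p r" "acts R w p' r'"
      and "pcong R (s # r) q" "pcong R (s # r') q'"
      by auto
    with Cons.IH show ?thesis
      using same_fraction_mult_left[of R p r p' r' "[s]"] by simp
  next
    case (Neg s)
    with Cons.prems Cons.IH have "same_fraction R p ([s] @ q) p' ([s] @ q')"
      by simp
    then show ?thesis
      by (rule same_fraction_cancel_left[OF assms(1)])
  qed
qed

lemma same_fraction_acts_append:
  assumes lc: "left_cancellative R"
    and IH: "\<And>p q p' q'. acts R w1 p q \<Longrightarrow> acts R w2 p' q' \<Longrightarrow> same_fraction R p q p' q'"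
    and IH': "\<And>p q p' q'. acts R w1' p q \<Longrightarrow> acts R w2' p' q' \<Longrightarrow> same_fraction R p q p' q'"
    and "acts R (w1 @ w1') p q" and "acts R (w2 @ w2') p' q'"
  shows "same_fraction R p q p' q'"
proof -
  from assms(4,5) obtain r r' where r: "acts R w1' p r" "acts R w1 r q"
    and r': "acts R w2' p' r'" "acts R w2 r' q'"
    by (auto simp: acts_append)
  from IH'[OF r(1) r'(1)] obtain x x'
    where p: "pcong R (p @ x) (p' @ x')" and rx: "pcong R (r @ x) (r' @ x')"
    unfolding same_fraction_def by blast
  have "acts R w2 (r @ x) (q' @ x')"
    using acts_pcong[OF acts_append_right[OF r'(2)] pcong.sym[OF rx] pcong.refl] .
  from IH[OF acts_append_right[OF r(2), of x] this] obtain y y'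
    where "pcong R (r @ x @ y) (r @ x @ y')" and q: "pcong R (q @ x @ y) (q' @ x' @ y')"
    unfolding same_fraction_def by auto
  then have "pcong R y y'"
    using left_cancellativeD[OF lc, of "r @ x"] by simp
  have "pcong R (p @ x @ y) (p' @ x' @ y)"
    using pcong_append_right[OF p, of y] by simp
  moreover have "pcong R (q @ x @ y) (q' @ x' @ y)"
    using pcong.trans[OF q] pcong_append_left[OF pcong.sym[OF \<open>pcong R y y'\<close>], of "q' @ x'"]
    by simp
  ultimately show ?thesis
    unfolding same_fraction_def by (metis append.assoc)
qed

lemma gcong_same_fraction:
  assumes lc: "left_cancellative R" and crm: "common_right_multiples R"
  shows "gcong R w w' \<Longrightarrow> acts R w p q \<Longrightarrow> acts R w' p' q' \<Longrightarrow> same_fraction R p q p' q'"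
proof (induction arbitrary: p q p' q' rule: gcong.induct)
  case (base u v)
  then have "pcong R (u @ p) q" and "pcong R (u @ p') q'"
    using pcong.trans[OF pcong_append_right[OF pcong.base[OF base.hyps]]] by (auto simp: acts_pw)
  with same_fraction_mult_left[OF same_fraction_if_pcong[OF crm pcong.refl pcong.refl]]
  show ?case .
next
  case (invr s)
  then have "pcong R p q" and "pcong R p' q'"
    by (auto intro: pcong.trans)
  then show ?case
    by (rule same_fraction_if_pcong[OF crm])
next
  case (invl s)
  then obtain r where "pcong R p r" and "pcong R ([s] @ r) ([s] @ q)"
    by auto
  then have "pcong R p q"
    using left_cancellativeD[OF lc] pcong.trans by blast
  moreover have "pcong R p' q'"
    using invl.prems(2) by simp
  ultimately show ?case
    by (rule same_fraction_if_pcong[OF crm])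
next
  case (refl w)
  then show ?case
    by (rule acts_unique[OF lc crm])
next
  case (sym w w')
  then show ?case
    by (blast intro: same_fraction_sym)
next
  case (trans w1 w2 w3)
  obtain p2 q2 where "acts R w2 p2 q2"
    using acts_exists[OF crm] by blast
  with trans.IH trans.prems show ?case
    by (blast intro: same_fraction_trans[OF crm])
next
  case (compat w1 w2 w1' w2')
  show ?case
    by (rule same_fraction_acts_append[OF lc compat.IH compat.prems])
qed

lemma same_fraction_Nil_iff: "same_fraction R [] v [] v' \<longleftrightarrow> (\<exists>x. pcong R (v @ x) (v' @ x))"
  unfolding same_fraction_def
  by (auto intro: pcong.trans[OF _ pcong_append_left[OF pcong.sym]])

lemma gcong_fraction_iff:
  assumes "left_cancellative R" and "common_right_multiples R"
  shows "gcong R (pw v @ iw u) (pw v' @ iw u') \<longleftrightarrow> same_fraction R u v u' v'"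
  using gcong_same_fraction[OF assms _ acts_fraction acts_fraction] gcong_fraction
  unfolding same_fraction_def by blast

lemma gcong_iff_rrev_same_fraction:
  assumes "left_cancellative R" and "common_right_multiples R" and "r_complete R"
  shows "gcong R w w' \<longleftrightarrow> (\<exists>u v u' v'. rrev R w (pw v @ iw u) \<and> rrev R w' (pw v' @ iw u') \<and>
    same_fraction R u v u' v')"
proof
  assume "gcong R w w'"
  obtain u v u' v' where w: "rrev R w (pw v @ iw u)" and w': "rrev R w' (pw v' @ iw u')"
    using rrev_to_fraction[OF assms(2,3)] by meson
  have "gcong R (pw v @ iw u) (pw v' @ iw u')"
    using gcong.sym[OF rrev_gcong[OF w]] \<open>gcong R w w'\<close> rrev_gcong[OF w'] by (blast intro: gcong.trans)
  with w w' gcong_fraction_iff[OF assms(1,2)]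
  show "\<exists>u v u' v'. rrev R w (pw v @ iw u) \<and> rrev R w' (pw v' @ iw u') \<and> same_fraction R u v u' v'"
    by blast
next
  assume "\<exists>u v u' v'. rrev R w (pw v @ iw u) \<and> rrev R w' (pw v' @ iw u') \<and> same_fraction R u v u' v'"
  with gcong_fraction_iff[OF assms(1,2)] show "gcong R w w'"
    by (blast intro: gcong.trans gcong.sym rrev_gcong)
qed

theorem proposition7p3:
  fixes R :: "('a list \<times> 'a list) set"
  assumes "positive_presentation R"
    and "r_complete R"
    and "cond_C R"
    and "cond_E R"
  shows "(\<forall>w w'. gcong R w w' \<longleftrightarrow>
            (\<exists>u v x u' v' x'. rrev R w (pw v @ iw u) \<and> rrev R w' (pw v' @ iw u') \<and>
               pcong R (u @ x) (u' @ x') \<and> pcong R (v @ x) (v' @ x')))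
       \<and> (\<forall>u u'. gcong R (pw u) (pw u') \<longleftrightarrow> (\<exists>x. pcong R (u @ x) (u' @ x)))"
proof -
  have lc: "left_cancellative R"
    using assms(3,2) by (rule left_cancellative_if_complete)
  have crm: "common_right_multiples R"
    using assms(4) by (rule common_right_multiples_if_cond_E)
  have "gcong R w w' \<longleftrightarrow> (\<exists>u v u' v'. rrev R w (pw v @ iw u) \<and> rrev R w' (pw v' @ iw u') \<and>
    same_fraction R u v u' v')" for w w'
    using lc crm assms(2) by (rule gcong_iff_rrev_same_fraction)
  moreover have "gcong R (pw u) (pw u') \<longleftrightarrow> (\<exists>x. pcong R (u @ x) (u' @ x))" for u u'
    using gcong_fraction_iff[OF lc crm, of u "[]" u' "[]"] by (simp add: same_fraction_Nil_iff)
  ultimately show ?thesis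
    unfolding same_fraction_def by blast
qed

end
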